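(* Let $n\ge 1$ and $m\ge 0$ be integers and let $r$ be an integer with $0\le r\le m$. Then $$\mathcal Y_n\big(2^{\{r\}},1^{\{m-r\}}\big)=\frac{1}{(r+1)n}\binom{m}{r}\left(\binom{n-1}{m}+(-1)^r\binom{n-1}{m+r+1}\right).$$ That is, the sum of $\mathfrak Z_n(\sigma)$ over all distinct permutations $\sigma$ of the multiset consisting of $r$ copies of $2$ and $m-r$ copies of $1$ equals the right-hand side.
   Context: Let $\zeta_n=e^{2\pi\sqrt{-1}/n}$. For positive integers $s_1,\dots,s_m$, define $\mathfrak Z_n(s_1,\dots,s_m):=\sum_{1\le i_1<\cdots<i_m\le n-1}\prod_{k=1}^{m}(1-\zeta_n^{i_k})^{-s_k}$ (equal to $1$ if $m=0$ and to $0$ if $m>n-1$). Define $\mathcal Y_n(s_1,\dots,s_m):=\sum_{\sigma}\mathfrak Z_n(\sigma)$, where $\sigma$ runs over all distinct rearrangements of $(s_1,\dots,s_m)$; $\mathcal Y_n$ of the empty sequence is $1$. Notation: $a^{\{k\}}$ denotes the block $a,\dots,a$ of length $k$. Binomial coefficients $\binom{a}{b}$ are $0$ when $b<0$ or $b>a\ge0$. *)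

theory Defs
  imports Complex_Main "HOL-Library.Multiset"
begin

definition zeta :: "nat \<Rightarrow> complex" where
  "zeta n = cis (2 * pi / real n)"

text \<open>Z_n(s_1,...,s_m): sum over 1 <= i_1 < ... < i_m <= n-1, i.e. over m-element subsets
  of {1..n-1} listed in increasing order.\<close>
definition frakZ :: "nat \<Rightarrow> nat list \<Rightarrow> complex" where
  "frakZ n s = (\<Sum>I \<in> {I. I \<subseteq> {1..n-1} \<and> card I = length s}.
      \<Prod>k<length s. inverse ((1 - zeta n ^ (sorted_list_of_set I ! k)) ^ (s ! k)))"

definition calY :: "nat \<Rightarrow> nat list \<Rightarrow> complex" where
  "calY n s = (\<Sum>\<sigma> \<in> {xs. mset xs = mset s}. frakZ n \<sigma>)"

end

theory Submission
  imports Defs "HOL-Computational_Algebra.Fundamental_Theorem_Algebra"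
begin

(* Put x_i = 1 / (1 - zeta^i) for 0 < i < n. Expanding the product of the trinomials
   1 + x_i t + x_i^2 u shows that Y_n(2^{r}, 1^{m-r}) is the coefficient of t^(m-r) u^r in
   F(t, u) = prod_i (1 + x_i t + x_i^2 u). At t = -(a+b), u = ab every factor splits as
   (1 - a x_i)(1 - b x_i), and since the zeta^i are the roots of 1 + z + ... + z^(n-1),
   n a prod_i (1 - a x_i) = 1 - (1 - a)^n. Expanding (1 - a)^n + (1 - b)^n binomially gives
   the polynomial identity
     n^2 u F = (1 + t + u)^n + 1 - sum_N C(n,N) (-1)^N p_N(t, u),
   where p_N(-(a+b), ab) = a^N + b^N. The coefficients of p_N are known (Waring's formula),
   so comparing coefficients of t^(m-r) u^(r+1) leaves two binomial identities. *)

section \<open>Products over roots of unity\<close>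

lemma zeta_power: "zeta n ^ k = cis (2 * pi * real k / real n)"
  unfolding zeta_def by (simp add: DeMoivre mult_ac)

lemma prod_zeta_power_linear_factors:
  assumes "n > 0"
  shows "(\<Prod>k<n. [:- (zeta n ^ k), 1:]) = monom 1 n - 1"
proof -
  define p :: "complex poly" where "p = monom 1 n - 1"
  have poly_p: "poly p z = z ^ n - 1" for z
    by (simp add: p_def poly_monom)
  have "lead_coeff ((-1) + monom 1 n :: complex poly) = 1"
    using assms by (subst lead_coeff_add_le) (auto simp: degree_monom_eq)
  then have "lead_coeff p = 1"
    by (simp add: p_def)
  moreover have "rsquarefree p"
    unfolding rsquarefree_roots
  proof (intro allI notI)
    fix z assume "poly p z = 0 \<and> poly (pderiv p) z = 0"
    then have "z ^ n = 1" "of_nat n * z ^ (n - 1) = 0"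
      by (simp_all add: poly_p p_def pderiv_diff pderiv_monom poly_monom)
    then show False
      using assms by (cases "z = 0") (auto simp: power_0_left)
  qed
  ultimately have "p = (\<Prod>z\<in>{z. z ^ n = 1}. [:- z, 1:])"
    using complex_poly_decompose_rsquarefree[of p] by (simp add: poly_p)
  also have "\<dots> = (\<Prod>k<n. [:- (zeta n ^ k), 1:])"
    unfolding zeta_power using assms
    by (intro prod.reindex_bij_betw[symmetric] bij_betw_roots_unity)
  finally show ?thesis
    by (simp add: p_def)
qed

lemma prod_nontrivial_zeta_power_linear_factors:
  assumes "n > 0"
  shows "(\<Prod>k\<in>{1..n-1}. z - zeta n ^ k) = (\<Sum>j<n. z ^ j)"
proof -
  define P where "P = (\<Prod>k\<in>{1..n-1}. [:- (zeta n ^ k), 1:])"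
  define S :: "complex poly" where "S = (\<Sum>j<n. monom 1 j)"
  have "[:-1, 1:] * P = [:-1, 1:] * S"
  proof (rule poly_ext)
    fix w
    have "{..<n} = insert 0 {1..n-1}"
      using assms by auto
    then have "poly ([:-1, 1:] * P) w = poly (monom 1 n - 1) w"
      by (simp add: P_def prod_zeta_power_linear_factors[OF assms, symmetric] poly_prod)
    also have "\<dots> = (w - 1) * (\<Sum>j<n. w ^ j)"
      by (simp add: poly_monom power_diff_1_eq)
    finally show "poly ([:-1, 1:] * P) w = poly ([:-1, 1:] * S) w"
      by (simp add: S_def poly_sum poly_monom algebra_simps)
  qed
  then have "P = S"
    by (subst (asm) mult_left_cancel) auto
  then have "poly P z = poly S z"
    by simp
  then show ?thesis
    by (simp add: P_def S_def poly_prod poly_sum poly_monom)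
qed

corollary prod_one_minus_zeta_power:
  "n > 0 \<Longrightarrow> (\<Prod>k\<in>{1..n-1}. 1 - zeta n ^ k) = of_nat n"
  using prod_nontrivial_zeta_power_linear_factors[of n 1] by simp

corollary one_minus_zeta_power_nonzero:
  assumes "n > 0" "k \<in> {1..n-1}"
  shows "1 - zeta n ^ k \<noteq> 0"
proof
  assume "1 - zeta n ^ k = 0"
  then have "(\<Prod>k\<in>{1..n-1}. 1 - zeta n ^ k) = 0"
    using assms(2) by (intro prod_zero) auto
  then have "(of_nat n :: complex) = 0"
    by (simp only: prod_one_minus_zeta_power[OF assms(1)])
  then show False
    using assms(1) by simp
qed

section \<open>Bivariate polynomials\<close>

text \<open>A polynomial in \<open>t\<close> and \<open>u\<close> is a polynomial in \<open>t\<close> whose coefficients are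
  polynomials in \<open>u\<close>.\<close>

definition poly2 :: "'a::comm_semiring_0 poly poly \<Rightarrow> 'a \<Rightarrow> 'a \<Rightarrow> 'a" where
  "poly2 P t u = poly (poly P [:t:]) u"

definition coeff2 :: "'a::zero poly poly \<Rightarrow> nat \<Rightarrow> nat \<Rightarrow> 'a" where
  "coeff2 P i j = coeff (coeff P i) j"

definition tvar :: "'a::comm_semiring_1 poly poly" where
  "tvar = [:0, 1:]"

definition uvar :: "'a::comm_semiring_1 poly poly" where
  "uvar = [:[:0, 1:]:]"

definition const2 :: "'a::zero \<Rightarrow> 'a poly poly" where
  "const2 c = [:[:c:]:]"

lemma poly2_simps [simp]:
  fixes P Q :: "'a::comm_ring_1 poly poly"
  shows "poly2 0 t u = 0"
    and "poly2 1 t u = 1"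
    and "poly2 (P + Q) t u = poly2 P t u + poly2 Q t u"
    and "poly2 (P - Q) t u = poly2 P t u - poly2 Q t u"
    and "poly2 (- P) t u = - poly2 P t u"
    and "poly2 (P * Q) t u = poly2 P t u * poly2 Q t u"
    and "poly2 (P ^ k) t u = poly2 P t u ^ k"
    and "poly2 (\<Sum>i\<in>A. F i) t u = (\<Sum>i\<in>A. poly2 (F i) t u)"
    and "poly2 (\<Prod>i\<in>A. F i) t u = (\<Prod>i\<in>A. poly2 (F i) t u)"
    and "poly2 tvar t u = t"
    and "poly2 uvar t u = u"
    and "poly2 (const2 c) t u = c"
  by (simp_all add: poly2_def poly_sum poly_prod tvar_def uvar_def const2_def)

lemma const2_mult: "const2 (a * b) = const2 a * (const2 b :: 'a::comm_semiring_1 poly poly)"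
  by (simp add: const2_def)

lemma const2_prod: "const2 (\<Prod>i\<in>A. f i) = (\<Prod>i\<in>A. const2 (f i) :: 'a::comm_semiring_1 poly poly)"
proof (induction A rule: infinite_finite_induct)
  case (insert x F)
  then show ?case
    by (simp add: const2_mult)
qed (simp_all add: const2_def one_pCons)

lemma poly2_eqI:
  fixes P Q :: "'a::{comm_ring_1, ring_no_zero_divisors, ring_char_0} poly poly"
  assumes "\<And>t u. poly2 P t u = poly2 Q t u"
  shows "P = Q"
proof -
  have eval_inner: "poly (map_poly (\<lambda>c. poly c u) R) t = poly2 R t u" for R :: "'a poly poly" and t u
    by (induction R) (simp_all add: poly2_def map_poly_pCons)
  have "poly (coeff P i) u = poly (coeff Q i) u" for i u
  proof -
    have "map_poly (\<lambda>c. poly c u) P = map_poly (\<lambda>c. poly c u) Q"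
      using assms by (simp add: eval_inner poly_eq_poly_eq_iff[symmetric] fun_eq_iff)
    then show ?thesis
      by (metis coeff_map_poly poly_0)
  qed
  then have "coeff P i = coeff Q i" for i
    using poly_eq_poly_eq_iff by blast
  then show ?thesis
    by (simp add: poly_eq_iff)
qed

lemma coeff2_simps [simp]:
  fixes P Q :: "'a::comm_ring_1 poly poly"
  shows "coeff2 0 i j = 0"
    and "coeff2 1 i j = (if i = 0 \<and> j = 0 then 1 else 0)"
    and "coeff2 (P + Q) i j = coeff2 P i j + coeff2 Q i j"
    and "coeff2 (P - Q) i j = coeff2 P i j - coeff2 Q i j"
    and "coeff2 (- P) i j = - coeff2 P i j"
    and "coeff2 (\<Sum>x\<in>A. F x) i j = (\<Sum>x\<in>A. coeff2 (F x) i j)"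
    and "coeff2 (const2 c) i j = (if i = 0 \<and> j = 0 then c else 0)"
    and "coeff2 (const2 c * P) i j = c * coeff2 P i j"
  by (simp_all add: coeff2_def coeff_sum const2_def coeff_pCons split: nat.split)

lemma coeff2_tvar_mult:
  "coeff2 (tvar * P) i j = (if i = 0 then 0 else coeff2 P (i - 1) j)"
  by (simp add: coeff2_def tvar_def coeff_pCons split: nat.split)

lemma coeff2_uvar_mult:
  "coeff2 (uvar * P) i j = (if j = 0 then 0 else coeff2 P i (j - 1))"
  by (simp add: coeff2_def uvar_def coeff_pCons split: nat.split)

lemma coeff2_monomial:
  "coeff2 (const2 c * tvar ^ a * uvar ^ b) i j = (if i = a \<and> j = b then c else 0)"
  by (simp add: coeff2_def const2_def tvar_def uvar_def poly_const_pow
      monom_altdef[symmetric] coeff_monom_mult)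

lemma coeff2_prod_trinomials:
  fixes f g :: "'b \<Rightarrow> 'a::comm_ring_1"
  assumes "finite A"
  shows "coeff2 (\<Prod>i\<in>A. 1 + const2 (f i) * tvar + const2 (g i) * uvar) s r
    = (\<Sum>B | B \<subseteq> A \<and> card B = s + r. \<Sum>R | R \<subseteq> B \<and> card R = r.
        (\<Prod>i\<in>R. g i) * (\<Prod>i\<in>B - R. f i))"
proof -
  define h where "h B R = (\<Prod>i\<in>R. g i) * (\<Prod>i\<in>B - R. f i)" for B R
  have expand_B: "(\<Prod>i\<in>B. const2 (g i) * uvar + const2 (f i) * tvar)
      = (\<Sum>R\<in>Pow B. const2 (h B R) * tvar ^ card (B - R) * uvar ^ card R)" if "finite B" for B
    by (simp add: prod_add[OF that] prod.distrib const2_prod const2_mult h_def mult_ac)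
  have "(\<Prod>i\<in>A. 1 + const2 (f i) * tvar + const2 (g i) * uvar)
      = (\<Sum>B\<in>Pow A. \<Prod>i\<in>B. const2 (g i) * uvar + const2 (f i) * tvar)"
    using prod_add[OF assms, of "\<lambda>i. const2 (g i) * uvar + const2 (f i) * tvar" "\<lambda>_. 1"]
    by (simp add: algebra_simps)
  also have "\<dots> = (\<Sum>B\<in>Pow A. \<Sum>R\<in>Pow B. const2 (h B R) * tvar ^ card (B - R) * uvar ^ card R)"
    using assms by (intro sum.cong refl expand_B) (auto intro: finite_subset)
  finally have "coeff2 (\<Prod>i\<in>A. 1 + const2 (f i) * tvar + const2 (g i) * uvar) s r
      = (\<Sum>B\<in>Pow A. \<Sum>R\<in>Pow B. if s = card (B - R) \<and> r = card R then h B R else 0)"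
    by (simp add: coeff2_monomial)
  also have "\<dots> = (\<Sum>B\<in>Pow A. if card B = s + r then \<Sum>R | R \<subseteq> B \<and> card R = r. h B R else 0)"
  proof (intro sum.cong refl)
    fix B assume "B \<in> Pow A"
    then have "finite B"
      using assms by (auto intro: finite_subset)
    then have "(\<Sum>R\<in>Pow B. if s = card (B - R) \<and> r = card R then h B R else 0)
        = (\<Sum>R\<in>Pow B. if card B = s + r then if card R = r then h B R else 0 else 0)"
      by (intro sum.cong refl) (auto simp: card_Diff_subset card_mono finite_subset)
    also have "\<dots> = (if card B = s + r then \<Sum>R | R \<subseteq> B \<and> card R = r. h B R else 0)"
      using \<open>finite B\<close> by (simp add: sum.inter_filter[symmetric] Pow_def conj_commute)
    finally show "(\<Sum>R\<in>Pow B. if s = card (B - R) \<and> r = card R then h B R else 0) = \<dots>" .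
  qed
  also have "\<dots> = (\<Sum>B | B \<subseteq> A \<and> card B = s + r. \<Sum>R | R \<subseteq> B \<and> card R = r. h B R)"
    using assms by (simp add: sum.inter_filter[symmetric] Pow_def)
  finally show ?thesis
    by (simp add: h_def)
qed

lemma coeff2_trinomial_power:
  "coeff2 ((1 + tvar + uvar) ^ n :: 'a::comm_ring_1 poly poly) i j = of_nat (n choose i) * of_nat ((n - i) choose j)"
proof -
  have coeff_binomial: "coeff ([:1, 1:] ^ k) j = (of_nat (k choose j) :: 'a)" for k
  proof (cases "j \<le> k")
    case False
    then have "degree ([:1, 1:] ^ k :: 'a poly) < j"
      using degree_power_le[of "[:1, 1:] :: 'a poly" k] by simp
    then show ?thesis
      using False by (simp add: coeff_eq_0 binomial_eq_0)
  qed (simp add: coeff_linear_poly_power)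
  have "(1 + tvar + uvar) ^ n = (tvar + (1 + uvar) :: 'a poly poly) ^ n"
    by (simp add: algebra_simps)
  also have "\<dots> = (\<Sum>k\<le>n. of_nat (n choose k) * tvar ^ k * (1 + uvar) ^ (n - k))"
    by (rule binomial_ring)
  also have "\<dots> = (\<Sum>k\<le>n. const2 (of_nat (n choose k)) * monom ([:1, 1:] ^ (n - k)) k)"
    by (intro sum.cong refl)
      (simp add: uvar_def tvar_def const2_def of_nat_poly one_pCons poly_const_pow monom_altdef mult_ac)
  moreover have "coeff2 (monom q k) i j = (if i = k then coeff q j else 0)" for q :: "'a poly" and k
    by (simp add: coeff2_def coeff_monom)
  ultimately show ?thesis
    by (simp add: coeff_binomial binomial_eq_0 if_distrib[of "\<lambda>x. _ * x"] cong: if_cong)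
qed

section \<open>Power sums of two roots\<close>

fun power_sum2 :: "nat \<Rightarrow> 'a::comm_ring_1 poly poly" where
  "power_sum2 0 = const2 2"
| "power_sum2 (Suc 0) = - tvar"
| "power_sum2 (Suc (Suc N)) = - (tvar * power_sum2 (Suc N)) - uvar * power_sum2 N"

lemma poly2_power_sum2: "poly2 (power_sum2 N) (- a - b) (a * b) = a ^ N + b ^ N"
  by (induction N rule: power_sum2.induct) (simp_all add: algebra_simps)

text \<open>For \<open>i + j > 0\<close> this is the coefficient \<open>(i + 2 j) / (i + j) * ((i + j) choose j)\<close> of
  Waring's formula, written without division.\<close>

definition waring_coeff :: "nat \<Rightarrow> nat \<Rightarrow> nat" where
  "waring_coeff i j = ((i + j) choose j) + ((i + j - 1) choose i)"

lemma waring_coeff_Suc_Suc: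
  "waring_coeff (Suc i) (Suc j) = waring_coeff i (Suc j) + waring_coeff (Suc i) j"
proof -
  have "(Suc i + Suc j - 1) choose Suc i = (i + Suc j - 1 choose i) + (Suc i + j - 1 choose Suc i)"
    by (simp add: binomial_Suc_Suc[symmetric] del: binomial_Suc_Suc)
  then show ?thesis
    by (simp add: waring_coeff_def)
qed

lemma coeff2_power_sum2:
  "coeff2 (power_sum2 N) i j = (if N = i + 2 * j then (-1) ^ (i + j) * of_nat (waring_coeff i j) else 0)"
proof (induction N arbitrary: i j rule: power_sum2.induct)
  case 1
  then show ?case
    by (auto simp: waring_coeff_def)
next
  case 2
  then show ?case
    by (auto simp: coeff2_def tvar_def coeff_pCons waring_coeff_def split: nat.split)
next
  case (3 N)
  show ?case
  proof (cases i; cases j)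
    fix i' j' assume "i = Suc i'" "j = Suc j'"
    then show ?thesis
      by (auto simp: coeff2_tvar_mult coeff2_uvar_mult 3 waring_coeff_Suc_Suc algebra_simps)
  qed (auto simp: coeff2_tvar_mult coeff2_uvar_mult 3 waring_coeff_def binomial_eq_0)
qed

section \<open>The generating polynomial\<close>

definition inv_one_minus_zeta :: "nat \<Rightarrow> nat \<Rightarrow> complex" where
  "inv_one_minus_zeta n i = inverse (1 - zeta n ^ i)"

lemma prod_one_minus_mult_inv_one_minus_zeta:
  assumes "n > 0"
  shows "of_nat n * a * (\<Prod>i\<in>{1..n-1}. 1 - a * inv_one_minus_zeta n i) = 1 - (1 - a) ^ n"
proof -
  have "(\<Prod>i\<in>{1..n-1}. 1 - a * inv_one_minus_zeta n i)
      = (\<Prod>i\<in>{1..n-1}. (1 - a) - zeta n ^ i) / (\<Prod>i\<in>{1..n-1}. 1 - zeta n ^ i)"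
  proof (unfold prod_dividef[symmetric], intro prod.cong refl)
    fix i assume "i \<in> {1..n-1}"
    then show "1 - a * inv_one_minus_zeta n i = ((1 - a) - zeta n ^ i) / (1 - zeta n ^ i)"
      using one_minus_zeta_power_nonzero[OF assms] by (simp add: inv_one_minus_zeta_def field_simps)
  qed
  also have "\<dots> = (\<Sum>j<n. (1 - a) ^ j) / of_nat n"
    unfolding prod_one_minus_zeta_power[OF assms] prod_nontrivial_zeta_power_linear_factors[OF assms] ..
  finally show ?thesis
    using assms one_diff_power_eq[of "1 - a" n] by simp
qed

lemma sum_binomial_alternating:
  "(\<Sum>N\<le>n. of_nat (n choose N) * (-1) ^ N * a ^ N) = (1 - a :: 'a::comm_ring_1) ^ n"
proof -
  have "(1 - a) ^ n = (- a + 1) ^ n"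
    by simp
  also have "\<dots> = (\<Sum>N\<le>n. of_nat (n choose N) * (- a) ^ N * 1 ^ (n - N))"
    by (rule binomial_ring)
  finally show ?thesis
    by (simp add: power_minus[of a] mult.assoc)
qed

definition calY_generating_poly :: "nat \<Rightarrow> complex poly poly" where
  "calY_generating_poly n = (\<Prod>i\<in>{1..n-1}.
     1 + const2 (inv_one_minus_zeta n i) * tvar + const2 (inv_one_minus_zeta n i ^ 2) * uvar)"

lemma calY_generating_poly_identity:
  assumes "n > 0"
  shows "const2 (of_nat n ^ 2) * uvar * calY_generating_poly n
    = (1 + tvar + uvar) ^ n + 1 - (\<Sum>N\<le>n. const2 (of_nat (n choose N) * (-1) ^ N) * power_sum2 N)"
proof (rule poly2_eqI)
  fix t u :: complex
  define d where "d = csqrt (t ^ 2 - 4 * u)"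
  obtain a b where t: "t = - a - b" and u: "u = a * b"
  proof (rule that[of "(- t + d) / 2" "(- t - d) / 2"])
    have "d ^ 2 = t ^ 2 - 4 * u"
      by (simp add: d_def)
    then show "u = (- t + d) / 2 * ((- t - d) / 2)"
      by (simp add: field_simps power2_eq_square)
  qed (simp add: field_simps)
  let ?x = "inv_one_minus_zeta n"
  have "poly2 (const2 (of_nat n ^ 2) * uvar * calY_generating_poly n) t u
      = of_nat n ^ 2 * (a * b) * (\<Prod>i\<in>{1..n-1}. (1 - a * ?x i) * (1 - b * ?x i))"
    by (simp add: calY_generating_poly_def t u algebra_simps power2_eq_square)
  also have "\<dots> = (of_nat n * a * (\<Prod>i\<in>{1..n-1}. 1 - a * ?x i))
      * (of_nat n * b * (\<Prod>i\<in>{1..n-1}. 1 - b * ?x i))"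
    by (simp add: prod.distrib power2_eq_square mult_ac)
  also have "\<dots> = (1 - (1 - a) ^ n) * (1 - (1 - b) ^ n)"
    by (simp only: prod_one_minus_mult_inv_one_minus_zeta[OF assms])
  also have "\<dots> = ((1 - a) * (1 - b)) ^ n + 1 - ((1 - a) ^ n + (1 - b) ^ n)"
    unfolding power_mult_distrib by (simp add: algebra_simps)
  also have "\<dots> = (1 + t + u) ^ n + 1 - (\<Sum>N\<le>n. of_nat (n choose N) * (-1) ^ N * (a ^ N + b ^ N))"
    by (simp only: distrib_left sum.distrib sum_binomial_alternating) (simp add: t u algebra_simps)
  also have "\<dots> = poly2 ((1 + tvar + uvar) ^ n + 1
      - (\<Sum>N\<le>n. const2 (of_nat (n choose N) * (-1) ^ N) * power_sum2 N)) t u"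
    using poly2_power_sum2[of _ a b] by (simp add: t u mult.assoc)
  finally show "poly2 (const2 (of_nat n ^ 2) * uvar * calY_generating_poly n) t u = \<dots>" .
qed

lemma coeff2_calY_generating_poly:
  assumes "n > 0"
  shows "of_nat n ^ 2 * coeff2 (calY_generating_poly n) s r
    = of_nat (n choose s) * of_nat ((n - s) choose (r + 1))
      + (-1) ^ r * of_nat (n choose (s + 2 * (r + 1))) * of_nat (waring_coeff s (r + 1))"
proof -
  define K where "K = s + 2 * (r + 1)"
  have sign: "(-1) ^ K * (-1) ^ (s + (r + 1)) = - ((-1) ^ r :: complex)"
  proof -
    have "(-1) ^ K * (-1) ^ (s + (r + 1)) = ((-1) ^ (2 * (s + r + 1) + (r + 1)) :: complex)"
      unfolding power_add[symmetric] by (simp add: K_def algebra_simps)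
    then show ?thesis
      by (simp add: power_add power_mult)
  qed
  have "of_nat n ^ 2 * coeff2 (calY_generating_poly n) s r
      = coeff2 (const2 (of_nat n ^ 2) * uvar * calY_generating_poly n) s (r + 1)"
    by (simp add: mult.assoc coeff2_uvar_mult)
  also have "\<dots> = of_nat (n choose s) * of_nat ((n - s) choose (r + 1))
      - (\<Sum>N\<le>n. of_nat (n choose N) * (-1) ^ N
          * (if N = K then (-1) ^ (s + (r + 1)) * of_nat (waring_coeff s (r + 1)) else 0))"
    unfolding calY_generating_poly_identity[OF assms]
    by (simp add: coeff2_trinomial_power coeff2_power_sum2 K_def mult.assoc cong: if_cong)
  also have "\<dots> = of_nat (n choose s) * of_nat ((n - s) choose (r + 1))
      - of_nat (n choose K) * ((-1) ^ K * (-1) ^ (s + (r + 1))) * of_nat (waring_coeff s (r + 1))"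
    by (cases "K \<le> n") (simp_all add: if_distrib[of "\<lambda>x. _ * x"] binomial_eq_0 mult_ac cong: if_cong)
  also have "\<dots> = of_nat (n choose s) * of_nat ((n - s) choose (r + 1))
      + (-1) ^ r * of_nat (n choose K) * of_nat (waring_coeff s (r + 1))"
    unfolding sign by simp
  finally show ?thesis
    by (simp only: K_def)
qed

lemma Suc_times_choose_mult_choose:
  assumes "r \<le> m"
  shows "(r + 1) * ((n choose (m - r)) * ((n - (m - r)) choose (r + 1)))
    = n * ((m choose r) * ((n - 1) choose m))"
proof (cases "m + 1 \<le> n")
  case True
  have "(m + 1) choose (m - r) = (m + 1) choose (r + 1)"
    using binomial_symmetric[of "r + 1" "m + 1"] assms by (simp add: Suc_diff_le)
  moreover have "m + 1 - (m - r) = r + 1"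
    using assms by simp
  ultimately have trinomial_revision:
    "(n choose (m - r)) * ((n - (m - r)) choose (r + 1)) = (n choose (m + 1)) * ((m + 1) choose (r + 1))"
    using choose_mult[of "m - r" "m + 1" n] True by simp
  have absorb_m: "(r + 1) * ((m + 1) choose (r + 1)) = (m + 1) * (m choose r)"
    using Suc_times_binomial[of r m] by simp
  have absorb_n: "(m + 1) * (n choose (m + 1)) = n * ((n - 1) choose m)"
    using times_binomial_minus1_eq[of "m + 1" n] by simp
  have "(r + 1) * ((n choose (m - r)) * ((n - (m - r)) choose (r + 1)))
      = (n choose (m + 1)) * ((r + 1) * ((m + 1) choose (r + 1)))"
    unfolding trinomial_revision by (simp only: mult_ac)
  also have "\<dots> = ((m + 1) * (n choose (m + 1))) * (m choose r)"
    unfolding absorb_m by (simp only: mult_ac)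
  finally show ?thesis
    unfolding absorb_n by (simp only: mult_ac)
next
  case False
  then show ?thesis
    using assms by (cases "m - r \<le> n") (auto simp: binomial_eq_0)
qed

lemma Suc_times_choose_mult_waring_coeff:
  assumes "r \<le> m"
  shows "(r + 1) * ((n choose (m + r + 2)) * waring_coeff (m - r) (r + 1))
    = n * ((m choose r) * ((n - 1) choose (m + r + 1)))"
proof -
  have "waring_coeff (m - r) (r + 1) = ((m + 1) choose (r + 1)) + (m choose r)"
    using assms binomial_symmetric[of r m] by (simp add: waring_coeff_def Suc_diff_le)
  moreover have "(r + 1) * ((m + 1) choose (r + 1)) = (m + 1) * (m choose r)"
    using Suc_times_binomial[of r m] by simp
  ultimately have absorb_m: "(r + 1) * waring_coeff (m - r) (r + 1) = (m + r + 2) * (m choose r)"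
    by (simp add: algebra_simps)
  have absorb_n: "(m + r + 2) * (n choose (m + r + 2)) = n * ((n - 1) choose (m + r + 1))"
    using times_binomial_minus1_eq[of "m + r + 2" n] by simp
  have "(r + 1) * ((n choose (m + r + 2)) * waring_coeff (m - r) (r + 1))
      = ((m + r + 2) * (n choose (m + r + 2))) * (m choose r)"
    unfolding mult.left_commute[of "r + 1"] absorb_m by (simp only: mult_ac)
  then show ?thesis
    unfolding absorb_n by (simp only: mult_ac)
qed

lemma coeff2_calY_generating_poly_closed_form:
  assumes "n > 0" and "r \<le> m"
  shows "of_nat (r + 1) * of_nat n * coeff2 (calY_generating_poly n) (m - r) r
    = of_nat (m choose r) * (of_nat ((n - 1) choose m) + (-1) ^ r * of_nat ((n - 1) choose (m + r + 1)))"
proof -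
  have exponent: "m - r + 2 * (r + 1) = m + r + 2"
    using assms(2) by simp
  have "of_nat n * (of_nat (r + 1) * of_nat n * coeff2 (calY_generating_poly n) (m - r) r)
      = of_nat (r + 1) * (of_nat n ^ 2 * coeff2 (calY_generating_poly n) (m - r) r)"
    by (simp add: power2_eq_square mult_ac)
  also have "\<dots> = of_nat ((r + 1) * ((n choose (m - r)) * ((n - (m - r)) choose (r + 1))))
      + (-1) ^ r * of_nat ((r + 1) * ((n choose (m + r + 2)) * waring_coeff (m - r) (r + 1)))"
    unfolding coeff2_calY_generating_poly[OF assms(1)] exponent of_nat_mult
    by (simp only: distrib_left mult_ac)
  also have "\<dots> = of_nat n * (of_nat (m choose r)
      * (of_nat ((n - 1) choose m) + (-1) ^ r * of_nat ((n - 1) choose (m + r + 1))))"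
    unfolding Suc_times_choose_mult_choose[OF assms(2)] Suc_times_choose_mult_waring_coeff[OF assms(2)]
      of_nat_mult
    by (simp only: distrib_left mult_ac)
  finally show ?thesis
    using assms(1) by simp
qed

section \<open>Arrangements of two values\<close>

lemma mset_map_if_mem:
  assumes "distinct L" and "R \<subseteq> set L"
  shows "mset (map (\<lambda>y. if y \<in> R then a else b) L)
    = mset (replicate (card R) a @ replicate (length L - card R) b)"
proof -
  let ?h = "\<lambda>y. if y \<in> R then a else b"
  have len_in: "length (filter (\<lambda>y. y \<in> R) L) = card R"
    using assms by (simp add: distinct_length_filter Int_absorb2)
  then have len_out: "length (filter (\<lambda>y. y \<notin> R) L) = length L - card R"
    using sum_length_filter_compl[of "\<lambda>y. y \<in> R" L] by simp
  have "mset L = mset (filter (\<lambda>y. y \<in> R) L @ filter (\<lambda>y. y \<notin> R) L)"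
    by (simp flip: multiset_partition)
  then have "mset (map ?h L) = mset (map ?h (filter (\<lambda>y. y \<in> R) L) @ map ?h (filter (\<lambda>y. y \<notin> R) L))"
    by (metis map_append mset_map)
  also have "map ?h (filter (\<lambda>y. y \<in> R) L) = replicate (length (filter (\<lambda>y. y \<in> R) L)) a"
    by (simp add: map_replicate_const[symmetric] cong: map_cong)
  also have "map ?h (filter (\<lambda>y. y \<notin> R) L) = replicate (length (filter (\<lambda>y. y \<notin> R) L)) b"
    by (simp add: map_replicate_const[symmetric] cong: map_cong)
  finally show ?thesis
    by (simp only: len_in len_out)
qed

lemma list_of_two_values_eq_map_if_mem:
  assumes "distinct L" and "length \<sigma> = length L" and "set \<sigma> \<subseteq> {a, b}"
  obtains R where "R \<subseteq> set L" and "card R = count (mset \<sigma>) a"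
    and "\<sigma> = map (\<lambda>y. if y \<in> R then a else b) L"
proof
  define R where "R = (\<lambda>k. L ! k) ` {k. k < length L \<and> \<sigma> ! k = a}"
  show "R \<subseteq> set L"
    by (auto simp: R_def)
  have "card R = card {k. k < length L \<and> \<sigma> ! k = a}"
    unfolding R_def using assms(1)
    by (intro card_image) (auto simp: inj_on_def nth_eq_iff_index_eq)
  also have "\<dots> = count (mset \<sigma>) a"
    using assms(2) by (simp add: count_mset count_list_eq_length_filter length_filter_conv_card eq_commute)
  finally show "card R = count (mset \<sigma>) a" .
  show "\<sigma> = map (\<lambda>y. if y \<in> R then a else b) L"
  proof (rule nth_equalityI)
    fix k assume "k < length \<sigma>"
    moreover from this have "\<sigma> ! k \<in> {a, b}"
      using assms(3) nth_mem by blast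
    moreover have "L ! k \<in> R \<longleftrightarrow> \<sigma> ! k = a" if "k < length L"
      using that assms(1) by (auto simp: R_def nth_eq_iff_index_eq)
    ultimately show "\<sigma> ! k = map (\<lambda>y. if y \<in> R then a else b) L ! k"
      using assms(2) by auto
  qed (simp add: assms(2))
qed

lemma bij_betw_subsets_arrangements_of_two_values:
  assumes "distinct L" and "r \<le> length L" and "a \<noteq> b"
  shows "bij_betw (\<lambda>R. map (\<lambda>y. if y \<in> R then a else b) L) {R. R \<subseteq> set L \<and> card R = r}
    {\<sigma>. mset \<sigma> = mset (replicate r a @ replicate (length L - r) b)}"
    (is "bij_betw ?arr ?T ?S")
proof (rule bij_betw_imageI)
  show "inj_on ?arr ?T"
  proof
    fix R R' assume "R \<in> ?T" "R' \<in> ?T" "?arr R = ?arr R'"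
    then have "\<forall>y\<in>set L. (y \<in> R) = (y \<in> R')" and "R \<subseteq> set L" "R' \<subseteq> set L"
      using assms(3) by (auto simp: map_eq_conv split: if_splits)
    then show "R = R'"
      by blast
  qed
  show "?arr ` ?T = ?S"
  proof
    show "?arr ` ?T \<subseteq> ?S"
      using mset_map_if_mem[OF assms(1)] by auto
    show "?S \<subseteq> ?arr ` ?T"
    proof
      fix \<sigma> assume "\<sigma> \<in> ?S"
      then have mset_\<sigma>: "mset \<sigma> = mset (replicate r a @ replicate (length L - r) b)"
        by simp
      have len: "length \<sigma> = length L"
        using arg_cong[OF mset_\<sigma>, of size] assms(2) by simp
      have vals: "set \<sigma> \<subseteq> {a, b}"
        using mset_eq_setD[OF mset_\<sigma>] by auto
      obtain R where "R \<subseteq> set L" "card R = count (mset \<sigma>) a" "\<sigma> = ?arr R"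
        using list_of_two_values_eq_map_if_mem[OF assms(1) len vals] by blast
      moreover have "count (mset \<sigma>) a = r"
        using mset_\<sigma> assms(3) by simp
      ultimately show "\<sigma> \<in> ?arr ` ?T"
        by blast
    qed
  qed
qed

lemma sum_arrangements_of_two_values:
  fixes f :: "'a \<Rightarrow> 'b \<Rightarrow> 'c::comm_semiring_1"
  assumes "distinct L" and "r \<le> length L" and "a \<noteq> b"
  shows "(\<Sum>\<sigma> | mset \<sigma> = mset (replicate r a @ replicate (length L - r) b).
        \<Prod>k<length L. f (L ! k) (\<sigma> ! k))
    = (\<Sum>R | R \<subseteq> set L \<and> card R = r. (\<Prod>y\<in>R. f y a) * (\<Prod>y\<in>set L - R. f y b))"
proof -
  let ?arr = "\<lambda>R. map (\<lambda>y. if y \<in> R then a else b) L"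
  have "(\<Sum>\<sigma> | mset \<sigma> = mset (replicate r a @ replicate (length L - r) b).
        \<Prod>k<length L. f (L ! k) (\<sigma> ! k))
      = (\<Sum>R | R \<subseteq> set L \<and> card R = r. \<Prod>k<length L. f (L ! k) (?arr R ! k))"
    by (rule sum.reindex_bij_betw[OF bij_betw_subsets_arrangements_of_two_values[OF assms], symmetric])
  also have "\<dots> = (\<Sum>R | R \<subseteq> set L \<and> card R = r. (\<Prod>y\<in>R. f y a) * (\<Prod>y\<in>set L - R. f y b))"
  proof (rule sum.cong[OF refl])
    fix R assume "R \<in> {R. R \<subseteq> set L \<and> card R = r}"
    have "(\<Prod>k<length L. f (L ! k) (?arr R ! k))
        = (\<Prod>k<length L. f (L ! k) (if L ! k \<in> R then a else b))"
      by (intro prod.cong) simp_all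
    also have "\<dots> = (\<Prod>y\<in>set L. f y (if y \<in> R then a else b))"
      by (rule prod.reindex_bij_betw[OF bij_betw_nth[OF assms(1) refl refl]])
    also have "\<dots> = (\<Prod>y\<in>R. f y a) * (\<Prod>y\<in>set L - R. f y b)"
      using \<open>R \<in> _\<close> by (simp add: if_distrib prod.If_cases Int_absorb2 Diff_eq Int_commute)
    finally show "(\<Prod>k<length L. f (L ! k) (?arr R ! k)) = \<dots>" .
  qed
  finally show ?thesis .
qed

lemma calY_eq_coeff2_calY_generating_poly:
  assumes "r \<le> m"
  shows "calY n (replicate r 2 @ replicate (m - r) 1) = coeff2 (calY_generating_poly n) (m - r) r"
proof -
  define S where "S = {\<sigma>. mset \<sigma> = mset (replicate r (2::nat) @ replicate (m - r) 1)}"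
  define \<I> where "\<I> = {I. I \<subseteq> {1..n-1} \<and> card I = m}"
  define f where "f y e = inverse ((1 - zeta n ^ y) ^ e)" for y e
  have "frakZ n \<sigma> = (\<Sum>I\<in>\<I>. \<Prod>k<m. f (sorted_list_of_set I ! k) (\<sigma> ! k))" if "\<sigma> \<in> S" for \<sigma>
  proof -
    have "length \<sigma> = length (replicate r (2::nat) @ replicate (m - r) 1)"
      using that by (intro mset_eq_length) (simp add: S_def)
    then have "length \<sigma> = m"
      using assms by simp
    then show ?thesis
      by (simp add: frakZ_def \<I>_def f_def)
  qed
  then have "calY n (replicate r 2 @ replicate (m - r) 1)
      = (\<Sum>\<sigma>\<in>S. \<Sum>I\<in>\<I>. \<Prod>k<m. f (sorted_list_of_set I ! k) (\<sigma> ! k))"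
    unfolding calY_def S_def by (intro sum.cong) simp_all
  also have "\<dots> = (\<Sum>I\<in>\<I>. \<Sum>\<sigma>\<in>S. \<Prod>k<m. f (sorted_list_of_set I ! k) (\<sigma> ! k))"
    by (rule sum.swap)
  also have "\<dots> = (\<Sum>I\<in>\<I>. \<Sum>R | R \<subseteq> I \<and> card R = r. (\<Prod>y\<in>R. f y 2) * (\<Prod>y\<in>I - R. f y 1))"
  proof (intro sum.cong refl)
    fix I assume "I \<in> \<I>"
    then have "finite I" "card I = m"
      by (auto simp: \<I>_def intro: finite_subset)
    then show "(\<Sum>\<sigma>\<in>S. \<Prod>k<m. f (sorted_list_of_set I ! k) (\<sigma> ! k))
        = (\<Sum>R | R \<subseteq> I \<and> card R = r. (\<Prod>y\<in>R. f y 2) * (\<Prod>y\<in>I - R. f y 1))"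
      using sum_arrangements_of_two_values[of "sorted_list_of_set I" r 2 1 f] assms
      by (simp add: S_def)
  qed
  also have "\<dots> = coeff2 (calY_generating_poly n) (m - r) r"
    unfolding calY_generating_poly_def
    by (subst coeff2_prod_trinomials)
      (use assms in \<open>simp_all add: \<I>_def f_def inv_one_minus_zeta_def power_inverse\<close>)
  finally show ?thesis .
qed

theorem theorem6:
  fixes n m r :: nat
  assumes "n \<ge> 1" and "r \<le> m"
  shows "calY n (replicate r 2 @ replicate (m - r) 1) =
    of_real (1 / (real (r + 1) * real n) * real (m choose r) *
      (real ((n - 1) choose m) + (-1) ^ r * real ((n - 1) choose (m + r + 1))))"
proof -
  have "n > 0"
    using assms(1) by simp
  then have "of_nat (r + 1) * of_nat n \<noteq> (0::complex)"
    by (metis mult_eq_0_iff of_nat_eq_0_iff add_eq_0_iff_both_eq_0 one_neq_zero not_gr_zero)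
  have "calY n (replicate r 2 @ replicate (m - r) 1) = coeff2 (calY_generating_poly n) (m - r) r"
    by (rule calY_eq_coeff2_calY_generating_poly[OF assms(2)])
  also have "\<dots> = of_nat (m choose r)
      * (of_nat ((n - 1) choose m) + (-1) ^ r * of_nat ((n - 1) choose (m + r + 1)))
      / (of_nat (r + 1) * of_nat n)"
    unfolding nonzero_eq_divide_eq[OF \<open>_ \<noteq> 0\<close>]
    using coeff2_calY_generating_poly_closed_form[OF \<open>n > 0\<close> assms(2)] by (simp only: mult.commute)
  finally show ?thesis
    by (simp add: field_simps)
qed

end
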